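(* Let $r\in\mathbb{N}^{\times}$ and $(\alpha_1,\dots,\alpha_r)\in(\mathbb{N}^{\times})^r$. Put $a_0=1$, $a_i=\alpha_i(a_0+\cdots+a_{i-1})$ for $1\le i\le r$, and $n=a_0+\cdots+a_r$. Then $\mathfrak p_s(a_0,\dots,a_r)$ is a Frobenius subalgebra of $\mathfrak{sl}(n)$.
   Context: All Lie algebras are over $\mathbb{C}$. The index of a Lie algebra $\mathfrak g$ is $\chi[\mathfrak g]=\min_{f\in\mathfrak g^*}\dim\{x\in\mathfrak g: f([x,y])=0\ \forall y\in\mathfrak g\}$; $\mathfrak g$ is Frobenius if its index is $0$. For a composition $(a_0,\dots,a_r)$ of $n$, $\mathfrak p(a_0,\dots,a_r)\subset\mathfrak{gl}(n)$ is the standard parabolic subalgebra of block upper triangular matrices with diagonal blocks of sizes $a_0,\dots,a_r$, and $\mathfrak p_s(a_0,\dots,a_r)=\mathfrak p(a_0,\dots,a_r)\cap\mathfrak{sl}(n)$. *)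

theory Defs
  imports Complex_Main "HOL-Library.Function_Algebras"
begin

text \<open>Square matrices of size n are modelled as functions nat => nat => complex
  vanishing outside the index range {0..<n} x {0..<n}.\<close>

type_synonym cmat = "nat \<Rightarrow> nat \<Rightarrow> complex"

definition mscale :: "complex \<Rightarrow> cmat \<Rightarrow> cmat" where
  "mscale c A = (\<lambda>i j. c * A i j)"

definition matsp :: "nat \<Rightarrow> cmat set" where
  "matsp n = {A. \<forall>i j. (n \<le> i \<or> n \<le> j) \<longrightarrow> A i j = 0}"

definition commutator :: "nat \<Rightarrow> cmat \<Rightarrow> cmat \<Rightarrow> cmat" where
  "commutator n A B = (\<lambda>i j. (\<Sum>k<n. A i k * B k j) - (\<Sum>k<n. B i k * A k j))"

definition mtrace :: "nat \<Rightarrow> cmat \<Rightarrow> complex" where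
  "mtrace n A = (\<Sum>i<n. A i i)"

text \<open>Composition given as a list of block sizes (a_0,...,a_r); blk as i is the index of
  the diagonal block containing row/column i.\<close>

definition blk :: "nat list \<Rightarrow> nat \<Rightarrow> nat" where
  "blk as i = (LEAST k. i < sum_list (take (Suc k) as))"

definition parabolic :: "nat list \<Rightarrow> cmat set" where
  "parabolic as = {A \<in> matsp (sum_list as).
      \<forall>i<sum_list as. \<forall>j<sum_list as. blk as j < blk as i \<longrightarrow> A i j = 0}"

definition parabolic_s :: "nat list \<Rightarrow> cmat set" where
  "parabolic_s as = {A \<in> parabolic as. mtrace (sum_list as) A = 0}"

definition linear_on :: "cmat set \<Rightarrow> (cmat \<Rightarrow> complex) \<Rightarrow> bool" where
  "linear_on g f \<longleftrightarrow> (\<forall>x\<in>g. \<forall>y\<in>g. f (x + y) = f x + f y) \<and>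
                      (\<forall>c. \<forall>x\<in>g. f (mscale c x) = c * f x)"

definition stab :: "nat \<Rightarrow> cmat set \<Rightarrow> (cmat \<Rightarrow> complex) \<Rightarrow> cmat set" where
  "stab n g f = {x \<in> g. \<forall>y\<in>g. f (commutator n x y) = 0}"

definition lie_index :: "nat \<Rightarrow> cmat set \<Rightarrow> nat" where
  "lie_index n g = (LEAST d. \<exists>f. linear_on g f \<and> d = vector_space.dim mscale (stab n g f))"

definition frobenius :: "nat \<Rightarrow> cmat set \<Rightarrow> bool" where
  "frobenius n g \<longleftrightarrow> lie_index n g = 0"

end

theory Submission
  imports Defs
begin

(* For a suitable matrix F the functional tr(F y) on p_s has trivial stabilizer.
  For x in the parabolic p the stabilizer condition says that [F, x] is trace-orthogonal to p_s;
  since [F, x] is traceless, this means that [F, x] is strictly block upper triangular.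
  We construct F such that every x in p with this property is scalar; in p_s the scalars vanish. A block of size alpha s, where s is the total size of the
  earlier blocks, is attached in alpha steps of size s: each step places the previous matrix on the
  last indices and couples them to the first s indices by an identity block. The commutator equations
  then force the new lower-right corner of x to stabilize the functional of the previous matrix,
  hence to be scalar, and tie the other blocks of x to that scalar. *)

lemma frobeniusI:
  assumes "linear_on g f" and "stab n g f \<subseteq> {0}"
  shows "frobenius n g"
proof -
  interpret vector_space mscale
    by unfold_locales (auto simp: mscale_def plus_fun_def algebra_simps fun_eq_iff)
  have "span (stab n g f) = span {}"
    using assms(2) by (metis span_empty span_insert_0 subset_singletonD)
  then have "dim (stab n g f) = 0"
    by (metis dim_span dim_span_eq_card_independent independent_empty card.empty)
  then show ?thesis
    unfolding frobenius_def lie_index_def using assms(1) by (intro Least_eq_0 exI[of _ f]) simp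
qed

definition trace_form :: "nat \<Rightarrow> cmat \<Rightarrow> cmat \<Rightarrow> complex" where
  "trace_form n F y = (\<Sum>u<n. \<Sum>v<n. F v u * y u v)"

lemma linear_on_trace_form: "linear_on g (trace_form n F)"
  unfolding linear_on_def trace_form_def
  by (auto simp: plus_fun_def mscale_def distrib_left sum.distrib sum_distrib_left mult.left_commute)

lemma trace_form_commutator:
  "trace_form n F (commutator n x y) = trace_form n (commutator n F x) y"
proof -
  have expand: "trace_form n F (commutator n x y) =
      (\<Sum>u<n. \<Sum>v<n. \<Sum>k<n. F v u * x u k * y k v) - (\<Sum>u<n. \<Sum>v<n. \<Sum>k<n. F v u * y u k * x k v)"
    unfolding trace_form_def commutator_def
    by (simp add: right_diff_distrib sum_subtractf sum_distrib_left mult.assoc)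
  have reindex1: "(\<Sum>u<n. \<Sum>v<n. \<Sum>k<n. F v u * x u k * y k v) = (\<Sum>u<n. \<Sum>v<n. \<Sum>k<n. F v k * x k u * y u v)"
    by (subst sum.swap) (subst (2) sum.swap, rule sum.cong, simp, rule sum.swap)
  have reindex2: "(\<Sum>u<n. \<Sum>v<n. \<Sum>k<n. F v u * y u k * x k v) = (\<Sum>u<n. \<Sum>v<n. \<Sum>k<n. x v k * F k u * y u v)"
    by (rule sum.cong[OF refl], subst sum.swap) (simp add: ac_simps)
  have collect: "(\<Sum>u<n. \<Sum>v<n. \<Sum>k<n. F v k * x k u * y u v) - (\<Sum>u<n. \<Sum>v<n. \<Sum>k<n. x v k * F k u * y u v) =
      trace_form n (commutator n F x) y"
    unfolding trace_form_def commutator_def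
    by (simp only: left_diff_distrib sum_subtractf sum_distrib_right)
  show ?thesis
    by (simp only: expand reindex1 reindex2 collect)
qed

lemma mtrace_commutator: "mtrace n (commutator n A B) = 0"
proof -
  have "(\<Sum>i<n. \<Sum>k<n. B i k * A k i) = (\<Sum>k<n. \<Sum>i<n. A k i * B i k)"
    by (subst sum.swap) (simp add: mult.commute)
  then show ?thesis
    unfolding mtrace_def commutator_def by (simp add: sum_subtractf)
qed

definition block_parabolic :: "nat \<Rightarrow> (nat \<Rightarrow> nat) \<Rightarrow> cmat set" where
  "block_parabolic N b = {A \<in> matsp N. \<forall>i<N. \<forall>j<N. b j < b i \<longrightarrow> A i j = 0}"

lemma parabolic_s_eq_block_parabolic:
  "parabolic_s as = {A \<in> block_parabolic (sum_list as) (blk as). mtrace (sum_list as) A = 0}"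
  unfolding parabolic_s_def parabolic_def block_parabolic_def ..

definition strictly_block_upper :: "nat \<Rightarrow> (nat \<Rightarrow> nat) \<Rightarrow> cmat \<Rightarrow> bool" where
  "strictly_block_upper N b C \<longleftrightarrow> (\<forall>i<N. \<forall>j<N. \<not> b i < b j \<longrightarrow> C i j = 0)"

definition scalar_matrix :: "nat \<Rightarrow> cmat \<Rightarrow> bool" where
  "scalar_matrix N x \<longleftrightarrow> (\<exists>l. \<forall>i<N. \<forall>j<N. x i j = (if i = j then l else 0))"

text \<open>The functional \<open>tr(F \<cdot>)\<close> on the parabolic subalgebra of \<open>gl(N)\<close> is regular, its
  stabilizer consisting of the scalars: \<open>x\<close> stabilizes it iff \<open>[F, x]\<close> is trace-orthogonal to the
  parabolic, i.e. strictly block upper triangular.\<close>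

definition regular_form :: "nat \<Rightarrow> (nat \<Rightarrow> nat) \<Rightarrow> cmat \<Rightarrow> bool" where
  "regular_form N b F \<longleftrightarrow>
     (\<forall>x \<in> block_parabolic N b. strictly_block_upper N b (commutator N F x) \<longrightarrow> scalar_matrix N x)"

lemma trace_form_unit:
  assumes "u < N" "v < N"
  shows "trace_form N C (\<lambda>i j. if i = u \<and> j = v then 1 else 0) = C v u"
proof -
  have "(\<Sum>v'<N. C v' u' * (if u' = u \<and> v' = v then 1 else 0)) = (if u' = u then C v u else 0)" for u'
    using assms by (cases "u' = u") (simp_all add: if_distrib[of "(*) _"] cong: if_cong)
  then show ?thesis
    using assms by (simp add: trace_form_def)
qed

lemma trace_form_diagonal:
  "trace_form N C (\<lambda>i j. if i = j \<and> i < N then d i else 0) = (\<Sum>u<N. C u u * d u)"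
  unfolding trace_form_def by (intro sum.cong refl) (simp add: if_distrib[of "(*) _"] cong: if_cong)

lemma strictly_block_upper_if_orthogonal:
  assumes "0 < N" and "mtrace N C = 0"
    and orth: "\<And>y. y \<in> block_parabolic N b \<Longrightarrow> mtrace N y = 0 \<Longrightarrow> trace_form N C y = 0"
  shows "strictly_block_upper N b C"
  unfolding strictly_block_upper_def
proof (intro allI impI)
  fix i j assume ij: "i < N" "j < N" "\<not> b i < b j"
  show "C i j = 0"
  proof (cases "i = j")
    case False
    let ?y = "\<lambda>u v. if u = j \<and> v = i then 1 else 0"
    have "?y \<in> block_parabolic N b" "mtrace N ?y = 0"
      using ij False by (auto simp: block_parabolic_def matsp_def mtrace_def intro!: sum.neutral)
    then show ?thesis using orth trace_form_unit[OF ij(2,1), where C = C] by simp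
  next
    case True
    define d :: "nat \<Rightarrow> complex" where "d u = (if u = i then 1 else 0) - 1 / of_nat N" for u
    let ?y = "\<lambda>u v. if u = v \<and> u < N then d u else 0"
    have "mtrace N ?y = 0"
      using ij \<open>0 < N\<close> by (simp add: mtrace_def d_def sum_subtractf)
    moreover have "?y \<in> block_parabolic N b"
      by (auto simp: block_parabolic_def matsp_def)
    moreover have "trace_form N C ?y = C i i - mtrace N C / of_nat N"
    proof -
      have "trace_form N C ?y = (\<Sum>u<N. C u u * d u)"
        by (rule trace_form_diagonal)
      also have "\<dots> = C i i - mtrace N C / of_nat N"
        using ij by (simp add: d_def right_diff_distrib sum_subtractf sum_divide_distrib mtrace_def
            if_distrib[of "(*) _"] cong: if_cong)
      finally show ?thesis .
    qed
    ultimately show ?thesis using orth True \<open>mtrace N C = 0\<close> by simp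
  qed
qed

lemma stab_traceless_block_parabolic:
  assumes "regular_form N b F" and "0 < N"
  shows "stab N {A \<in> block_parabolic N b. mtrace N A = 0} (trace_form N F) \<subseteq> {0}"
proof
  fix x assume "x \<in> stab N {A \<in> block_parabolic N b. mtrace N A = 0} (trace_form N F)"
  then have x: "x \<in> block_parabolic N b" "mtrace N x = 0"
    and orth: "\<And>y. y \<in> block_parabolic N b \<Longrightarrow> mtrace N y = 0 \<Longrightarrow> trace_form N (commutator N F x) y = 0"
    by (auto simp: stab_def trace_form_commutator)
  have "strictly_block_upper N b (commutator N F x)"
    using \<open>0 < N\<close> mtrace_commutator orth by (rule strictly_block_upper_if_orthogonal)
  then obtain l where l: "\<And>i j. i < N \<Longrightarrow> j < N \<Longrightarrow> x i j = (if i = j then l else 0)"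
    using assms(1) x(1) unfolding regular_form_def scalar_matrix_def by blast
  have "of_nat N * l = 0"
    using x(2) l by (simp add: mtrace_def)
  then have "l = 0" using \<open>0 < N\<close> by simp
  moreover have "x i j = 0" if "N \<le> i \<or> N \<le> j" for i j
    using x(1) that by (auto simp: block_parabolic_def matsp_def)
  ultimately have "x i j = 0" for i j
    using l by (metis not_le)
  then have "x = 0"
    by (simp add: fun_eq_iff)
  then show "x \<in> {0}" by simp
qed

lemma sum_lessThan_add: "(\<Sum>k<(m::nat) + n. f k) = (\<Sum>k<m. f k) + (\<Sum>k<n. f (m + k))"
  by (induction n) (auto simp: add.assoc)

text \<open>The block matrix \<open>[[0, 0], [J, F']]\<close> for the splitting \<open>M + c\<close>: \<open>F'\<close> sits on the last
  \<open>c\<close> indices and \<open>J = [I\<^sub>M; 0]\<close> (which needs \<open>M \<le> c\<close>) couples them to the first \<open>M\<close>.\<close>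

definition extend_form :: "nat \<Rightarrow> cmat \<Rightarrow> cmat" where
  "extend_form M F' = (\<lambda>i k. if M \<le> i \<and> M \<le> k then F' (i - M) (k - M) else if i = k + M then 1 else 0)"

definition lower_right_block :: "nat \<Rightarrow> nat \<Rightarrow> cmat \<Rightarrow> cmat" where
  "lower_right_block M c x = (\<lambda>i j. if i < c \<and> j < c then x (M + i) (M + j) else 0)"

lemma extend_form_row_low:
  "i < M \<Longrightarrow> (\<Sum>k<M + c. extend_form M F' i k * y k) = 0"
  by (auto simp: extend_form_def intro!: sum.neutral)

lemma extend_form_row_high:
  assumes "i < c"
  shows "(\<Sum>k<M + c. extend_form M F' (M + i) k * y k) = (if i < M then y i else 0) + (\<Sum>k<c. F' i k * y (M + k))"
proof -
  have "(\<Sum>k<M. extend_form M F' (M + i) k * y k) = (\<Sum>k<M. if k = i then y k else 0)"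
    by (intro sum.cong) (auto simp: extend_form_def)
  then show ?thesis
    by (simp add: sum_lessThan_add extend_form_def)
qed

lemma extend_form_col_low:
  assumes "j < M" "M \<le> c"
  shows "(\<Sum>k<M + c. y k * extend_form M F' k j) = y (M + j)"
proof -
  have "(\<Sum>k<c. y (M + k) * extend_form M F' (M + k) j) = (\<Sum>k<c. if k = j then y (M + k) else 0)"
    using assms by (intro sum.cong) (auto simp: extend_form_def)
  moreover have "(\<Sum>k<M. y k * extend_form M F' k j) = 0"
    using assms by (intro sum.neutral) (auto simp: extend_form_def)
  ultimately show ?thesis
    using assms by (simp add: sum_lessThan_add)
qed

lemma extend_form_col_high:
  "(\<Sum>k<M + c. y k * extend_form M F' k (M + j)) = (\<Sum>k<c. y (M + k) * F' k j)"
proof -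
  have "(\<Sum>k<M. y k * extend_form M F' k (M + j)) = 0"
    by (intro sum.neutral) (auto simp: extend_form_def)
  then show ?thesis
    by (simp add: sum_lessThan_add extend_form_def)
qed

lemma commutator_extend_form_lower_left:
  assumes "M \<le> c" and "\<And>k. k < c \<Longrightarrow> x (M + k) j = 0" and "i < c" "j < M"
  shows "commutator (M + c) (extend_form M F') x (M + i) j = (if i < M then x i j else 0) - x (M + i) (M + j)"
  using assms by (simp add: commutator_def extend_form_row_high extend_form_col_low)

lemma commutator_extend_form_upper_left:
  assumes "M \<le> c" and "i < M" "j < M"
  shows "commutator (M + c) (extend_form M F') x i j = - x i (M + j)"
  using assms by (simp add: commutator_def extend_form_row_low extend_form_col_low)

lemma commutator_extend_form_lower_right:
  assumes "i < c" "j < c"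
  shows "commutator (M + c) (extend_form M F') x (M + i) (M + j) =
    (if i < M then x i (M + j) else 0) + commutator c F' (lower_right_block M c x) i j"
  using assms
  by (simp add: commutator_def extend_form_row_high extend_form_col_high lower_right_block_def)

lemma commutator_scalar:
  assumes "\<And>i j. i < c \<Longrightarrow> j < c \<Longrightarrow> S i j = (if i = j then l else 0)" and "i < c" "j < c"
  shows "commutator c F S i j = 0"
proof -
  have "(\<Sum>k<c. F i k * S k j) = (\<Sum>k<c. if k = j then F i k * l else 0)"
    using assms by (intro sum.cong) auto
  moreover have "(\<Sum>k<c. S i k * F k j) = (\<Sum>k<c. if k = i then l * F k j else 0)"
    using assms by (intro sum.cong) auto
  ultimately show ?thesis
    using assms by (simp add: commutator_def mult.commute)
qed

context
  fixes M c :: nat and b :: "nat \<Rightarrow> nat" and F' x :: cmat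
  assumes M_le_c: "M \<le> c"
    and low_high: "\<And>i j. i < M \<Longrightarrow> M \<le> j \<Longrightarrow> j < M + c \<Longrightarrow> b i < b j"
    and high: "\<And>i j. M \<le> i \<Longrightarrow> i < M + c \<Longrightarrow> M \<le> j \<Longrightarrow> j < M + c \<Longrightarrow> b i = b j"
    and x_parabolic: "x \<in> block_parabolic (M + c) b"
    and x_stabilizes: "strictly_block_upper (M + c) b (commutator (M + c) (extend_form M F') x)"
begin

private lemma x_lower: "i < M + c \<Longrightarrow> j < M + c \<Longrightarrow> b j < b i \<Longrightarrow> x i j = 0"
  using x_parabolic by (simp add: block_parabolic_def)

private lemma commutator_lower:
  "i < M + c \<Longrightarrow> j < M + c \<Longrightarrow> \<not> b i < b j \<Longrightarrow> commutator (M + c) (extend_form M F') x i j = 0"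
  using x_stabilizes by (simp add: strictly_block_upper_def)

private lemma lower_left: "i < c \<Longrightarrow> j < M \<Longrightarrow> x (M + i) j = 0"
  using M_le_c low_high[of j "M + i"] by (intro x_lower) auto

private lemma lower_right_corner: "i < c \<Longrightarrow> j < M \<Longrightarrow> x (M + i) (M + j) = (if i < M then x i j else 0)"
  using M_le_c low_high[of j "M + i"] lower_left commutator_lower[of "M + i" j]
  by (simp add: commutator_extend_form_lower_left)

private lemma upper_right_below_diagonal_blocks: "i < M \<Longrightarrow> j < M \<Longrightarrow> \<not> b i < b j \<Longrightarrow> x i (M + j) = 0"
  using M_le_c commutator_lower[of i j] by (simp add: commutator_extend_form_upper_left)

private lemma commutator_lower_right_block:
  "i < c \<Longrightarrow> j < c \<Longrightarrow> commutator c F' (lower_right_block M c x) i j = - (if i < M then x i (M + j) else 0)"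
  using high[of "M + i" "M + j"] commutator_lower[of "M + i" "M + j"]
  by (simp add: commutator_extend_form_lower_right eq_neg_iff_add_eq_0 add.commute)

lemma lower_right_block_parabolic: "lower_right_block M c x \<in> block_parabolic c b"
  unfolding block_parabolic_def matsp_def
proof (intro CollectI conjI allI impI)
  fix i j assume ij: "i < c" "j < c" "b j < b i"
  with M_le_c low_high[of i j] high[of i j] have "j < M"
    by (cases "i < M"; cases "M \<le> j") auto
  moreover from ij have "i < M \<Longrightarrow> x i j = 0"
    by (intro x_lower) auto
  ultimately show "lower_right_block M c x i j = 0"
    using ij by (simp add: lower_right_block_def lower_right_corner)
qed (auto simp: lower_right_block_def)

lemma lower_right_block_stabilizes:
  "strictly_block_upper c b (commutator c F' (lower_right_block M c x))"
  unfolding strictly_block_upper_def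
proof (intro allI impI)
  fix i j assume "i < c" "j < c" "\<not> b i < b j"
  with M_le_c low_high[of i j] have "i < M \<Longrightarrow> j < M"
    by (cases "M \<le> j") auto
  with \<open>i < c\<close> \<open>j < c\<close> \<open>\<not> b i < b j\<close> show "commutator c F' (lower_right_block M c x) i j = 0"
    by (simp add: commutator_lower_right_block upper_right_below_diagonal_blocks)
qed

lemma scalar_matrix_if_lower_right_block:
  assumes "scalar_matrix c (lower_right_block M c x)"
  shows "scalar_matrix (M + c) x"
proof -
  from assms obtain l where l: "\<And>i j. i < c \<Longrightarrow> j < c \<Longrightarrow> lower_right_block M c x i j = (if i = j then l else 0)"
    unfolding scalar_matrix_def by blast
  have upper_right: "x i (M + j) = 0" if "i < M" "j < c" for i j
  proof -
    have "commutator c F' (lower_right_block M c x) i j = 0"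
      using that M_le_c by (intro commutator_scalar[OF l]) auto
    then show ?thesis
      using that M_le_c commutator_lower_right_block[of i j] by simp
  qed
  have "x i j = (if i = j then l else 0)" if "i < M + c" "j < M + c" for i j
  proof (cases "M \<le> i"; cases "M \<le> j")
    assume "M \<le> i" "M \<le> j"
    then show ?thesis
      using that l[of "i - M" "j - M"] by (auto simp: lower_right_block_def)
  next
    assume "M \<le> i" "\<not> M \<le> j"
    then show ?thesis
      using that low_high[of j i] x_lower[of i j] by auto
  next
    assume "\<not> M \<le> i" "M \<le> j"
    then show ?thesis
      using that upper_right[of i "j - M"] by auto
  next
    assume "\<not> M \<le> i" "\<not> M \<le> j"
    then show ?thesis
      using that M_le_c lower_right_corner[of i j] l[of i j] by (simp add: lower_right_block_def)
  qed
  then show ?thesis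
    unfolding scalar_matrix_def by blast
qed

end


lemma regular_form_extend:
  assumes F': "regular_form c b F'" and "M \<le> c"
    and "\<And>i j. i < M \<Longrightarrow> M \<le> j \<Longrightarrow> j < M + c \<Longrightarrow> b i < b j"
    and "\<And>i j. M \<le> i \<Longrightarrow> i < M + c \<Longrightarrow> M \<le> j \<Longrightarrow> j < M + c \<Longrightarrow> b i = b j"
  shows "regular_form (M + c) b (extend_form M F')"
  unfolding regular_form_def
proof (intro ballI impI)
  fix x
  assume "x \<in> block_parabolic (M + c) b"
    and "strictly_block_upper (M + c) b (commutator (M + c) (extend_form M F') x)"
  note block_facts = assms(2-4) this
  have "scalar_matrix c (lower_right_block M c x)"
    using F' lower_right_block_parabolic[OF block_facts] lower_right_block_stabilizes[OF block_facts]
    unfolding regular_form_def by blast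
  then show "scalar_matrix (M + c) x"
    using scalar_matrix_if_lower_right_block[OF block_facts] by blast
qed

lemma regular_form_one: "regular_form 1 b F"
  unfolding regular_form_def scalar_matrix_def by auto

lemma regular_form_add_block:
  assumes F: "regular_form s b F" and "s dvd m"
    and low_high: "\<And>i j. i < s \<Longrightarrow> s \<le> j \<Longrightarrow> j < s + m \<Longrightarrow> b i < b j"
    and high: "\<And>i j. s \<le> i \<Longrightarrow> i < s + m \<Longrightarrow> s \<le> j \<Longrightarrow> j < s + m \<Longrightarrow> b i = b j"
  shows "\<exists>F'. regular_form (s + m) b F'"
proof -
  obtain \<alpha> where m: "m = \<alpha> * s"
    using \<open>s dvd m\<close> by (metis dvdE mult.commute)
  have "t \<le> \<alpha> \<Longrightarrow> \<exists>F'. regular_form (s + t * s) b F'" for t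
  proof (induction t)
    case 0
    then show ?case using F by auto
  next
    case (Suc t)
    have bound: "s + (s + t * s) \<le> s + m"
      using mult_le_mono1[OF Suc.prems, of s] m by simp
    from Suc obtain F' where "regular_form (s + t * s) b F'" by auto
    then have "regular_form (s + (s + t * s)) b (extend_form s F')"
    proof (rule regular_form_extend)
      fix i j assume "i < s" "s \<le> j" "j < s + (s + t * s)"
      with bound show "b i < b j"
        by (meson low_high less_le_trans)
    next
      fix i j assume "s \<le> i" "i < s + (s + t * s)" "s \<le> j" "j < s + (s + t * s)"
      with bound show "b i = b j"
        by (meson high less_le_trans)
    qed simp
    then show ?case
      by (auto simp: add.assoc)
  qed
  then show ?thesis
    using m by blast
qed

lemma sum_list_take_mono:
  assumes "p \<le> q"
  shows "sum_list (take p xs) \<le> sum_list (take q (xs :: nat list))"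
proof -
  obtain d where "q = p + d"
    using assms le_Suc_ex by blast
  then show ?thesis
    by (simp add: take_add)
qed

lemma blk_le: "i < sum_list (take (Suc k) as) \<Longrightarrow> blk as i \<le> k"
  unfolding blk_def by (rule Least_le)

lemma blk_eqI:
  assumes "sum_list (take k as) \<le> i" and "i < sum_list (take (Suc k) as)"
  shows "blk as i = k"
  unfolding blk_def
proof (rule Least_equality)
  fix k' assume "i < sum_list (take (Suc k') as)"
  show "k \<le> k'"
  proof (rule ccontr)
    assume "\<not> k \<le> k'"
    then have "sum_list (take (Suc k') as) \<le> sum_list (take k as)"
      by (intro sum_list_take_mono) simp
    with assms(1) \<open>i < sum_list (take (Suc k') as)\<close> show False
      by simp
  qed
qed (rule assms(2))

lemma regular_form_exists:
  assumes "as \<noteq> []" and "as ! 0 = 1"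
    and dvd: "\<And>k. 0 < k \<Longrightarrow> k < length as \<Longrightarrow> sum_list (take k as) dvd as ! k"
  shows "\<exists>F. regular_form (sum_list as) (blk as) F"
proof -
  have "k < length as \<Longrightarrow> \<exists>F. regular_form (sum_list (take (Suc k) as)) (blk as) F" for k
  proof (induction k)
    case 0
    then show ?case
      using \<open>as ! 0 = 1\<close> regular_form_one by (simp add: take_Suc_conv_app_nth)
  next
    case (Suc k)
    define s where "s = sum_list (take (Suc k) as)"
    have sum_Suc: "sum_list (take (Suc (Suc k)) as) = s + as ! Suc k"
      using Suc.prems by (simp add: s_def take_Suc_conv_app_nth)
    have low: "blk as i \<le> k" if "i < s" for i
      using that by (simp add: s_def blk_le)
    have high: "blk as j = Suc k" if "s \<le> j" "j < s + as ! Suc k" for j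
      using that sum_Suc by (intro blk_eqI) (simp_all add: s_def)
    obtain F where "regular_form s (blk as) F"
      using Suc by (auto simp: s_def)
    moreover have "s dvd as ! Suc k"
      using Suc.prems dvd[of "Suc k"] by (simp add: s_def)
    ultimately have "\<exists>F. regular_form (s + as ! Suc k) (blk as) F"
    proof (rule regular_form_add_block)
      fix i j assume "i < s" "s \<le> j" "j < s + as ! Suc k"
      then show "blk as i < blk as j"
        using low high by (simp add: le_imp_less_Suc)
    next
      fix i j assume "s \<le> i" "i < s + as ! Suc k" "s \<le> j" "j < s + as ! Suc k"
      then show "blk as i = blk as j"
        using high by simp
    qed
    then show ?case
      by (simp add: sum_Suc)
  qed
  from this[of "length as - 1"] show ?thesis
    using \<open>as \<noteq> []\<close> by simp
qed

theorem frobenius_parabolic_s: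
  assumes "as \<noteq> []" and "as ! 0 = 1"
    and "\<And>k. 0 < k \<Longrightarrow> k < length as \<Longrightarrow> sum_list (take k as) dvd as ! k"
  shows "frobenius (sum_list as) (parabolic_s as)"
proof -
  obtain F where "regular_form (sum_list as) (blk as) F"
    using regular_form_exists assms by blast
  moreover have "0 < sum_list as"
    using member_le_sum_list[OF nth_mem[of 0 as]] assms(1,2) by simp
  ultimately have "stab (sum_list as) (parabolic_s as) (trace_form (sum_list as) F) \<subseteq> {0}"
    unfolding parabolic_s_eq_block_parabolic by (rule stab_traceless_block_parabolic)
  then show ?thesis
    by (rule frobeniusI[OF linear_on_trace_form])
qed

theorem mainTheorem9:
  fixes r :: nat and \<alpha> a :: "nat \<Rightarrow> nat" and n :: nat
  assumes "r \<ge> 1"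
    and "\<forall>i\<in>{1..r}. \<alpha> i \<ge> 1"
    and "a 0 = 1"
    and "\<forall>i\<in>{1..r}. a i = \<alpha> i * (\<Sum>j<i. a j)"
    and "n = (\<Sum>i\<le>r. a i)"
  shows "frobenius n (parabolic_s (map a [0..<Suc r]))"
proof -
  define as where "as = map a [0..<Suc r]"
  have sum_take: "sum_list (take k as) = (\<Sum>j<k. a j)" if "k \<le> Suc r" for k
    using that by (simp add: as_def take_map take_upt interv_sum_list_conv_sum_set_nat atLeast0LessThan
        del: upt_Suc)
  have "sum_list as = n"
    using sum_take[of "Suc r"] assms(5) by (simp add: as_def lessThan_Suc_atMost)
  moreover have "frobenius (sum_list as) (parabolic_s as)"
  proof (rule frobenius_parabolic_s)
    fix k assume "0 < k" "k < length as"
    then have "as ! k = \<alpha> k * sum_list (take k as)" and "k \<le> r"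
      using assms(4) sum_take[of k] by (auto simp: as_def simp del: upt_Suc)
    then show "sum_list (take k as) dvd as ! k"
      by simp
  qed (simp_all add: as_def assms(3) del: upt_Suc)
  ultimately show ?thesis
    by (simp add: as_def)
qed

end
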